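(* Let $\mu$ be an $E_2$-invariant Borel probability measure on $\mathbb{T}$ with $\mathrm{supp}(\mu)\subset F$ for some flower $F$ for $E_2$, and let $P$ be the petal of $F$ containing $0$. If $\mu(P)>0$, then $\mu(\{0\})>0$.
   Context: $\mathbb{T}=\mathbb{R}/\mathbb{Z}$, $E_2(x)=2x\bmod1$. A preimage selector for $E_2$ is a map $\eta:\mathbb{T}\to\mathbb{T}$ with $E_2(\eta(x))=x$ for all $x$, having finitely many discontinuities, each a jump discontinuity (both one-sided limits exist, differ, and one equals the value). A flower is $\overline{\eta(\mathbb{T})}$ for a preimage selector $\eta$; its connected components (closed intervals) are its petals. *)

theory Defs
  imports "HOL-Analysis.Analysis" "HOL-Probability.Probability"
begin

text \<open>The circle T = R/Z is modelled as the unit circle in the complex plane,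
  via the homeomorphism t mod 1 \<mapsto> exp(2 pi i t). Under this identification
  0 \<in> T corresponds to 1, and E_2(x) = 2x mod 1 corresponds to z \<mapsto> z^2.\<close>

definition circ :: "complex set" where
  "circ = sphere 0 1"

definition cpar :: "real \<Rightarrow> complex" where
  "cpar t = cis (2 * pi * t)"

definition E2 :: "complex \<Rightarrow> complex" where
  "E2 z = z ^ 2"

definition discont :: "(complex \<Rightarrow> complex) \<Rightarrow> complex set" where
  "discont \<eta> = {x \<in> circ. \<not> continuous (at x within circ) \<eta>}"

definition jump_at :: "(complex \<Rightarrow> complex) \<Rightarrow> complex \<Rightarrow> bool" where
  "jump_at \<eta> x \<longleftrightarrow> (\<forall>t. cpar t = x \<longrightarrow>
     (\<exists>L R. ((\<eta> \<circ> cpar) \<longlongrightarrow> L) (at_left t) \<and> ((\<eta> \<circ> cpar) \<longlongrightarrow> R) (at_right t)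
            \<and> L \<noteq> R \<and> (\<eta> x = L \<or> \<eta> x = R)))"

definition preimage_selector :: "(complex \<Rightarrow> complex) \<Rightarrow> bool" where
  "preimage_selector \<eta> \<longleftrightarrow>
     \<eta> ` circ \<subseteq> circ \<and> (\<forall>x\<in>circ. E2 (\<eta> x) = x) \<and>
     finite (discont \<eta>) \<and> (\<forall>x\<in>discont \<eta>. jump_at \<eta> x)"

definition flower :: "complex set \<Rightarrow> bool" where
  "flower F \<longleftrightarrow> (\<exists>\<eta>. preimage_selector \<eta> \<and> F = closure (\<eta> ` circ))"

definition support :: "'a::topological_space measure \<Rightarrow> 'a set" where
  "support M = {x \<in> space M. \<forall>U. open U \<and> x \<in> U \<longrightarrow> emeasure M (U \<inter> space M) > 0}"

end

(* Let P be the petal of 1. Walking from 1 in either direction along the circle, F contains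
   maximal arcs, and a connected subset of F through 1 cannot get past the first points outside F
   on either side, so P lies in the union of these two arcs.
   A preimage selector is continuous at cpar (2 x) whenever F contains an arc around cpar x,
   because near cpar (2 x) it must agree with the continuous inverse branch of E2; therefore F
   cannot contain both square roots of cpar (2 x), i.e. F avoids the antipodes of its arcs.
   Consequently, up to the complement of the support, E2 pulls the arc (0, c] back onto the arc
   (0, c/2], and invariance gives all the arcs (0, b/2^n] the same measure. Since they shrink to
   the empty set, both arcs of P are null, and the whole mass of P sits at 1. *)

theory Submission
  imports Defs
begin

lemma cpar_in_circ [simp]: "cpar t \<in> circ"
  by (simp add: cpar_def circ_def)

lemma cpar_0 [simp]: "cpar 0 = 1"
  by (simp add: cpar_def)

lemma cpar_add: "cpar (x + y) = cpar x * cpar y"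
  by (simp add: cpar_def cis_mult distrib_left)

lemma cpar_eq_iff: "cpar x = cpar y \<longleftrightarrow> x - y \<in> \<int>"
proof -
  have "cpar x = cpar (x - y) * cpar y"
    by (simp flip: cpar_add)
  moreover have "cpar y \<noteq> 0"
    by (simp add: cpar_def)
  ultimately have "cpar x = cpar y \<longleftrightarrow> cpar (x - y) = 1"
    by (metis mult_cancel_right1)
  also have "\<dots> \<longleftrightarrow> (\<exists>n::int. 2 * pi * (x - y) = of_int (2 * n) * pi)"
    by (simp add: cpar_def cis_conv_exp exp_eq_1)
  also have "\<dots> \<longleftrightarrow> x - y \<in> \<int>"
  proof -
    have "2 * pi * (x - y) = of_int (2 * n) * pi \<longleftrightarrow> x - y = of_int n" for n :: int
      by auto
    then show ?thesis
      by (auto simp: Ints_def)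
  qed
  finally show ?thesis .
qed

lemma cpar_eqD:
  assumes "cpar x = cpar y" and "\<bar>x - y\<bar> < 1"
  shows "x = y"
proof -
  obtain n :: int where n: "x - y = of_int n"
    using assms(1) by (auto simp: cpar_eq_iff elim: Ints_cases)
  with assms(2) have "n = 0"
    by linarith
  with n show ?thesis
    by simp
qed

lemma cpar_add_int: "n \<in> \<int> \<Longrightarrow> cpar (x + n) = cpar x"
  by (simp add: cpar_eq_iff)

lemma cpar_add_half: "cpar (x + 1/2) = - cpar x"
  by (simp add: cpar_def distrib_left minus_cis)

lemma cpar_diff_half: "cpar (x - 1/2) = - cpar x"
  using cpar_add_half[of "x - 1"] cpar_add_int[of "-1" x] by simp

lemma E2_cpar: "E2 (cpar x) = cpar (2 * x)"
  by (metis E2_def cpar_add mult_2 power2_eq_square)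

lemma continuous_on_cpar [continuous_intros]:
  "continuous_on S f \<Longrightarrow> continuous_on S (\<lambda>x. cpar (f x))"
  unfolding cpar_def cis_conv_exp by (intro continuous_intros)

lemma isCont_cpar: "isCont cpar x"
  using continuous_on_cpar[OF continuous_on_id, of UNIV]
  by (simp add: continuous_on_eq_continuous_at)

lemma circ_cparE:
  assumes "z \<in> circ"
  obtains t where "u \<le> t" "t < u + 1" "z = cpar t"
proof -
  define t0 where "t0 = Arg z / (2 * pi)"
  define t where "t = t0 - of_int \<lfloor>t0 - u\<rfloor>"
  have "z \<noteq> 0" "norm z = 1"
    using assms by (auto simp: circ_def)
  then have "cpar t0 = z"
    by (simp add: t0_def cpar_def cis_Arg sgn_div_norm)
  then have "cpar t = z"
    using cpar_add_int[of "- of_int \<lfloor>t0 - u\<rfloor>" t0] by (simp add: t_def)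
  moreover have "u \<le> t" "t < u + 1"
    using of_int_floor_le[of "t0 - u"] real_of_int_floor_add_one_gt[of "t0 - u"]
    unfolding t_def by linarith+
  ultimately show ?thesis
    using that by blast
qed

lemma eventually_cpar_notin_finite:
  assumes "finite D"
  shows "\<forall>\<^sub>F t in at x. cpar t \<notin> D"
proof -
  have avoid: "\<forall>\<^sub>F t in at x. cpar t \<noteq> \<delta>" for \<delta>
  proof (cases "\<delta> = cpar x")
    case True
    have "\<forall>\<^sub>F t in at x. t \<in> ball x 1 \<and> t \<noteq> x \<and> t \<in> UNIV"
      by (rule eventually_at_ball') simp
    then show ?thesis
    proof eventually_elim
      case (elim t)
      then have "\<bar>t - x\<bar> < 1" and "t \<noteq> x"
        by (auto simp: dist_real_def abs_minus_commute)
      then show ?case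
        using True cpar_eqD[of t x] by auto
    qed
  next
    case False
    from isCont_cpar[of x] have "(cpar \<longlongrightarrow> cpar x) (at x)"
      by (simp add: isCont_def)
    then show ?thesis
      by (rule tendsto_imp_eventually_ne) (use False in auto)
  qed
  have "\<forall>\<^sub>F t in at x. \<forall>\<delta>\<in>D. cpar t \<noteq> \<delta>"
    using assms avoid by (intro eventually_ball_finite) auto
  then show ?thesis
    by (rule eventually_mono) auto
qed

lemma preimage_selector_closure_fixed:
  assumes ps: "preimage_selector \<eta>" and w: "w \<in> closure (\<eta> ` circ)"
    and cont: "continuous (at (E2 w) within circ) \<eta>"
  shows "\<eta> (E2 w) = w"
proof -
  obtain g where g: "\<And>n. g n \<in> \<eta> ` circ" and lim: "g \<longlonglongrightarrow> w"
    using w closure_sequential by blast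
  have E2g: "E2 (g n) \<in> circ \<and> \<eta> (E2 (g n)) = g n" for n
    using g[of n] ps by (auto simp: preimage_selector_def)
  have "(\<lambda>n. E2 (g n)) \<longlonglongrightarrow> E2 w"
    using lim unfolding E2_def by (intro tendsto_intros)
  then have "(\<lambda>n. \<eta> (E2 (g n))) \<longlonglongrightarrow> \<eta> (E2 w)"
    using E2g by (intro cont[unfolded continuous_within_sequentially comp_def, rule_format]) auto
  then have "g \<longlonglongrightarrow> \<eta> (E2 w)"
    using E2g by simp
  with lim show ?thesis
    using LIMSEQ_unique by blast
qed

lemma preimage_selector_continuous_at_double:
  assumes ps: "preimage_selector \<eta>" and "0 < d"
    and arc: "cpar ` ball x d \<subseteq> closure (\<eta> ` circ)"
  shows "continuous (at (cpar (2 * x)) within circ) \<eta>"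
proof (rule ccontr)
  assume discontinuous: "\<not> ?thesis"
  have "\<forall>\<^sub>F t in at (2 * x). t \<in> ball (2 * x) (2 * d) \<and> t \<in> UNIV"
    using \<open>0 < d\<close> by (intro eventually_at_ball) simp
  moreover have "\<forall>\<^sub>F t in at (2 * x). cpar t \<notin> discont \<eta>"
    using ps by (intro eventually_cpar_notin_finite) (simp add: preimage_selector_def)
  ultimately have ev: "\<forall>\<^sub>F t in at (2 * x). (\<eta> \<circ> cpar) t = cpar (t / 2)"
  proof eventually_elim
    case (elim t)
    then have "cpar (t / 2) \<in> closure (\<eta> ` circ)"
      using arc by (auto simp: dist_real_def)
    moreover have "continuous (at (E2 (cpar (t / 2))) within circ) \<eta>"
      using elim by (simp add: E2_cpar discont_def)
    ultimately have "\<eta> (E2 (cpar (t / 2))) = cpar (t / 2)"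
      by (rule preimage_selector_closure_fixed[OF ps])
    then show ?case
      by (simp add: E2_cpar)
  qed
  have "((\<lambda>t. t / 2) \<longlongrightarrow> x) (at (2 * x))"
    by (auto intro!: tendsto_eq_intros)
  then have lim: "((\<lambda>t. cpar (t / 2)) \<longlongrightarrow> cpar x) (at (2 * x))"
    by (rule isCont_tendsto_compose[OF isCont_cpar])
  with tendsto_cong[OF ev] have "((\<eta> \<circ> cpar) \<longlongrightarrow> cpar x) (at (2 * x))"
    by blast
  then have left: "((\<eta> \<circ> cpar) \<longlongrightarrow> cpar x) (at_left (2 * x))"
    and right: "((\<eta> \<circ> cpar) \<longlongrightarrow> cpar x) (at_right (2 * x))"
    by (simp_all add: filterlim_at_split)
  have "cpar (2 * x) \<in> discont \<eta>"
    using discontinuous by (simp add: discont_def)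
  then have "jump_at \<eta> (cpar (2 * x))"
    using ps by (simp add: preimage_selector_def)
  then obtain L R where L: "((\<eta> \<circ> cpar) \<longlongrightarrow> L) (at_left (2 * x))"
    and R: "((\<eta> \<circ> cpar) \<longlongrightarrow> R) (at_right (2 * x))" and "L \<noteq> R"
    unfolding jump_at_def by blast
  moreover have "L = cpar x"
    using tendsto_unique[OF trivial_limit_at_left_real L left] .
  moreover have "R = cpar x"
    using tendsto_unique[OF trivial_limit_at_right_real R right] .
  ultimately show False
    by simp
qed

lemma flower_antipode_notin:
  assumes "flower F" and "0 < d" and arc: "cpar ` ball x d \<subseteq> F"
  shows "- cpar x \<notin> F"
proof
  assume antipode: "- cpar x \<in> F"
  obtain \<eta> where ps: "preimage_selector \<eta>" and F: "F = closure (\<eta> ` circ)"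
    using assms(1) by (auto simp: flower_def)
  have cont: "continuous (at (cpar (2 * x)) within circ) \<eta>"
    using preimage_selector_continuous_at_double[OF ps \<open>0 < d\<close>] arc F by simp
  have "cpar x \<in> F"
    using arc \<open>0 < d\<close> by auto
  then have "\<eta> (cpar (2 * x)) = cpar x"
    using preimage_selector_closure_fixed[OF ps] cont E2_cpar F by metis
  moreover have "\<eta> (cpar (2 * x)) = - cpar x"
    using preimage_selector_closure_fixed[OF ps, of "- cpar x"] cont antipode F E2_cpar
    by (simp add: E2_def)
  ultimately show False
    by (simp add: cpar_def)
qed

lemma flower_closed: "flower F \<Longrightarrow> closed F"
  by (auto simp: flower_def)

lemma flower_subset_circ:
  assumes "flower F"
  shows "F \<subseteq> circ"
proof -
  obtain \<eta> where "\<eta> ` circ \<subseteq> circ" and "F = closure (\<eta> ` circ)"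
    using assms by (auto simp: flower_def preimage_selector_def)
  moreover have "closed circ"
    by (simp add: circ_def)
  ultimately show ?thesis
    by (simp add: closure_minimal)
qed

lemma space_minus_support_null:
  fixes M :: "'a::second_countable_topology measure"
  assumes sets_M: "sets M = sets (restrict_space borel (space M))"
  shows "space M - support M \<in> null_sets M"
proof -
  define \<U> where "\<U> = {U. open U \<and> emeasure M (U \<inter> space M) = 0}"
  obtain \<U>' where "\<U>' \<subseteq> \<U>" and "countable \<U>'" and "\<Union>\<U>' = \<Union>\<U>"
    using Lindelof[of \<U>] by (auto simp: \<U>_def)
  have "x \<notin> support M \<longleftrightarrow> (\<exists>U\<in>\<U>. x \<in> U)" if "x \<in> space M" for x
    using that unfolding support_def \<U>_def by (auto simp: not_gr_zero)
  then have "space M - support M = (\<Union>U\<in>\<U>'. U \<inter> space M)"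
    using \<open>\<Union>\<U>' = \<Union>\<U>\<close> by blast
  moreover have "U \<inter> space M \<in> null_sets M" if "U \<in> \<U>" for U
  proof -
    have "U \<inter> space M \<in> sets (restrict_space borel (space M))"
      using that unfolding sets_restrict_space \<U>_def by (intro image_eqI[of _ _ U]) auto
    then show ?thesis
      using that sets_M by (intro null_setsI) (auto simp: \<U>_def)
  qed
  then have "(\<Union>U\<in>\<U>'. U \<inter> space M) \<in> null_sets M"
    using \<open>\<U>' \<subseteq> \<U>\<close> by (intro null_sets_UN'[OF \<open>countable \<U>'\<close>]) blast
  ultimately show ?thesis
    by simp
qed

lemma (in finite_measure) null_sets_if_vimage_shrinks:
  assumes preserving: "\<And>B. B \<in> sets M \<Longrightarrow> measure M (T -` B \<inter> space M) = measure M B"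
    and A: "range A \<subseteq> sets M" "decseq A" "(\<Inter>n. A n) = {}"
    and N: "N \<in> null_sets M"
    and shrinks: "\<And>n. T -` A n \<inter> space M \<subseteq> A (Suc n) \<union> N"
  shows "A 0 \<in> null_sets M"
proof -
  have "measure M (A (Suc n)) = measure M (A n)" for n
  proof (rule antisym)
    show "measure M (A (Suc n)) \<le> measure M (A n)"
      using A by (intro finite_measure_mono) (auto simp: decseq_Suc_iff)
    have "measure M (A n) = measure M (T -` A n \<inter> space M)"
      using preserving A by auto
    also have "\<dots> \<le> measure M (A (Suc n) \<union> N)"
      using shrinks A N by (intro finite_measure_mono) auto
    also have "\<dots> = measure M (A (Suc n))"
      using A N by (intro measure_Un_null_set) auto
    finally show "measure M (A n) \<le> measure M (A (Suc n))" .
  qed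
  then have "measure M (A n) = measure M (A 0)" for n
    by (induction n) auto
  then have "(\<lambda>n. measure M (A n)) = (\<lambda>n. measure M (A 0))"
    by (intro ext)
  then have "(\<lambda>n. measure M (A 0)) \<longlonglongrightarrow> measure M (\<Inter>n. A n)"
    using finite_Lim_measure_decseq[OF A(1,2)] by simp
  then have "measure M (A 0) = 0"
    using A(3) by (simp add: LIMSEQ_const_iff)
  then show ?thesis
    using A(1) by (auto simp: emeasure_eq_measure)
qed

definition punctured_arc :: "real \<Rightarrow> real \<Rightarrow> complex set" where
  "punctured_arc \<sigma> b = (\<lambda>r. cpar (\<sigma> * r)) ` {0<..b}"

lemma punctured_arc_subset_circ: "punctured_arc \<sigma> b \<subseteq> circ"
  by (auto simp: punctured_arc_def)

lemma punctured_arc_half_subset: "punctured_arc \<sigma> (b / 2) \<subseteq> punctured_arc \<sigma> b"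
  unfolding punctured_arc_def by (intro image_mono) auto

lemma cpar_scaled_eqD:
  assumes "\<bar>\<sigma>\<bar> = 1" and "cpar (\<sigma> * r) = cpar (\<sigma> * r')" and "\<bar>r - r'\<bar> < 1"
  shows "r = r'"
proof -
  have "\<bar>\<sigma> * r - \<sigma> * r'\<bar> < 1"
    using assms(1,3) by (simp add: abs_mult flip: right_diff_distrib)
  then have "\<sigma> * r = \<sigma> * r'"
    using assms(2) by (rule cpar_eqD[rotated])
  then show ?thesis
    using assms(1) by auto
qed

lemma punctured_arc_sets_borel:
  assumes "\<bar>\<sigma>\<bar> = 1" and "b < 1"
  shows "punctured_arc \<sigma> b \<in> sets borel"
proof -
  have "cpar (\<sigma> * r) \<noteq> 1" if "0 < r" "r \<le> b" for r
    using cpar_scaled_eqD[OF assms(1), of r 0] that assms(2) by auto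
  then have "punctured_arc \<sigma> b = (\<lambda>r. cpar (\<sigma> * r)) ` {0..b} - {1}"
    unfolding punctured_arc_def by (auto simp: image_iff Bex_def less_eq_real_def)
  moreover have "compact ((\<lambda>r. cpar (\<sigma> * r)) ` {0..b})"
    by (intro compact_continuous_image continuous_intros compact_Icc)
  ultimately show ?thesis
    by (simp add: borel_closed compact_imp_closed sets.Diff)
qed

lemma Inter_punctured_arcs_halving:
  assumes "\<bar>\<sigma>\<bar> = 1" and "b < 1"
  shows "(\<Inter>n. punctured_arc \<sigma> (b / 2 ^ n)) = {}"
proof (rule equals0I)
  fix z
  assume z: "z \<in> (\<Inter>n. punctured_arc \<sigma> (b / 2 ^ n))"
  then obtain r where r: "0 < r" "r \<le> b" "z = cpar (\<sigma> * r)"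
    using INT_D[OF z, of 0] by (auto simp: punctured_arc_def)
  obtain n where "b / r < 2 ^ n"
    using real_arch_pow[of 2 "b / r"] by auto
  with r have "b / 2 ^ n < r"
    by (simp add: field_simps)
  moreover obtain r' where "0 < r'" "r' \<le> b / 2 ^ n" "z = cpar (\<sigma> * r')"
    using INT_D[OF z, of n] by (auto simp: punctured_arc_def)
  ultimately show False
    using cpar_scaled_eqD[OF assms(1), of r r'] r assms(2) by auto
qed

lemma E2_in_punctured_arc:
  assumes "E2 z \<in> punctured_arc \<sigma> b"
  shows "z \<in> punctured_arc \<sigma> (b / 2) \<or> - z \<in> punctured_arc \<sigma> (b / 2)"
proof -
  obtain r where r: "0 < r" "r \<le> b" and "E2 z = cpar (\<sigma> * r)"
    using assms by (auto simp: punctured_arc_def)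
  then have "E2 z = E2 (cpar (\<sigma> * (r / 2)))"
    by (simp add: E2_cpar)
  then have "z = cpar (\<sigma> * (r / 2)) \<or> - z = cpar (\<sigma> * (r / 2))"
    by (auto simp: E2_def power2_eq_iff)
  moreover have "cpar (\<sigma> * (r / 2)) \<in> punctured_arc \<sigma> (b / 2)"
    unfolding punctured_arc_def by (rule image_eqI[where x = "r / 2"]) (use r in auto)
  ultimately show ?thesis
    by auto
qed

lemma flower_antipodes_punctured_arc:
  assumes "flower F" and \<sigma>: "\<bar>\<sigma>\<bar> = 1" and arc: "punctured_arc \<sigma> b \<subseteq> F"
    and "0 < s" and "s < b"
  shows "- cpar (\<sigma> * s) \<notin> F"
proof (rule flower_antipode_notin[OF \<open>flower F\<close>])
  show "0 < min s (b - s)"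
    using \<open>0 < s\<close> \<open>s < b\<close> by simp
  have "cpar r \<in> punctured_arc \<sigma> b" if "\<bar>r - \<sigma> * s\<bar> < min s (b - s)" for r
  proof -
    have "\<sigma> = 1 \<or> \<sigma> = -1"
      using \<sigma> by linarith
    then have "\<sigma> * r \<in> {0<..b}" and "r = \<sigma> * (\<sigma> * r)"
      using that by auto
    then show ?thesis
      unfolding punctured_arc_def by (metis image_eqI)
  qed
  then show "cpar ` ball (\<sigma> * s) (min s (b - s)) \<subseteq> F"
    using arc by (auto simp: dist_real_def abs_minus_commute)
qed

lemma flower_punctured_arc_le_half:
  assumes "flower F" and \<sigma>: "\<bar>\<sigma>\<bar> = 1" and arc: "punctured_arc \<sigma> b \<subseteq> F"
  shows "b \<le> 1 / 2"
proof (rule ccontr)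
  assume "\<not> b \<le> 1 / 2"
  define s where "s = (b - 1 / 2) / 2"
  have s: "0 < s" "s < b" "0 < s + 1 / 2" "s + 1 / 2 \<le> b"
    using \<open>\<not> b \<le> 1 / 2\<close> by (auto simp: s_def field_simps)
  then have "cpar (\<sigma> * (s + 1 / 2)) \<in> F"
    using arc unfolding punctured_arc_def by (auto intro: imageI)
  moreover have "\<sigma> = 1 \<or> \<sigma> = -1"
    using \<sigma> by linarith
  then have "cpar (\<sigma> * (s + 1 / 2)) = - cpar (\<sigma> * s)"
    using cpar_add_half[of s] cpar_diff_half[of "- s"] by auto
  ultimately show False
    using flower_antipodes_punctured_arc[OF assms s(1,2)] by simp
qed

lemma flower_vimage_punctured_arc:
  assumes "flower F" and "\<bar>\<sigma>\<bar> = 1" and "punctured_arc \<sigma> c \<subseteq> F"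
  shows "E2 -` punctured_arc \<sigma> c \<inter> circ \<subseteq> punctured_arc \<sigma> (c / 2) \<union> (circ - F)"
proof
  fix z
  assume z: "z \<in> E2 -` punctured_arc \<sigma> c \<inter> circ"
  show "z \<in> punctured_arc \<sigma> (c / 2) \<union> (circ - F)"
  proof (cases "z \<in> punctured_arc \<sigma> (c / 2)")
    case False
    with z have "- z \<in> punctured_arc \<sigma> (c / 2)"
      using E2_in_punctured_arc by blast
    then obtain s where "0 < s" "s \<le> c / 2" and zs: "- z = cpar (\<sigma> * s)"
      unfolding punctured_arc_def by auto
    then have "s < c"
      by linarith
    with \<open>0 < s\<close> have "- cpar (\<sigma> * s) \<notin> F"
      by (rule flower_antipodes_punctured_arc[OF assms])
    with zs have "z \<notin> F"
      by (metis minus_minus)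
    with z show ?thesis
      by simp
  qed simp
qed

lemma invariant_measure_punctured_arc_null:
  assumes "finite_measure M"
    and sets_M: "sets M = sets (restrict_space borel circ)" and space_M: "space M = circ"
    and invariant: "\<forall>B\<in>sets M. measure M (E2 -` B \<inter> space M) = measure M B"
    and "flower F" and support: "support M \<subseteq> F"
    and \<sigma>: "\<bar>\<sigma>\<bar> = 1" and arc: "punctured_arc \<sigma> b \<subseteq> F"
  shows "punctured_arc \<sigma> b \<in> null_sets M"
proof -
  interpret finite_measure M by fact
  have "b \<le> 1 / 2"
    using flower_punctured_arc_le_half[OF \<open>flower F\<close> \<sigma> arc] .
  define A where "A n = punctured_arc \<sigma> (b / 2 ^ n)" for n
  have A_Suc: "A (Suc n) = punctured_arc \<sigma> (b / 2 ^ n / 2)" for n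
    by (simp add: A_def mult.commute)
  have "b < 2 ^ n" for n
    using \<open>b \<le> 1 / 2\<close> one_le_power[of "2::real" n] by linarith
  then have "A n \<in> sets borel" for n
    unfolding A_def using \<sigma> by (intro punctured_arc_sets_borel) (simp_all add: divide_less_eq_1_pos)
  moreover have "circ \<inter> space borel \<in> sets borel"
    by (simp add: circ_def borel_closed)
  ultimately have A_sets: "range A \<subseteq> sets M"
    using sets_M punctured_arc_subset_circ by (auto simp: A_def sets_restrict_space_iff)
  have "A (Suc n) \<subseteq> A n" for n
    unfolding A_Suc unfolding A_def by (rule punctured_arc_half_subset)
  then have A_dec: "decseq A"
    by (simp add: decseq_Suc_iff)
  have A_Inter: "(\<Inter>n. A n) = {}"
    unfolding A_def using Inter_punctured_arcs_halving[OF \<sigma>] \<open>b \<le> 1 / 2\<close> by simp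
  have outside_null: "space M - support M \<in> null_sets M"
    using sets_M space_M by (intro space_minus_support_null) simp
  have "A n \<subseteq> F" for n
    using decseqD[OF A_dec, of 0 n] arc by (simp add: A_def)
  have shrinks: "E2 -` A n \<inter> space M \<subseteq> A (Suc n) \<union> (space M - support M)" for n
  proof -
    have "E2 -` A n \<inter> space M \<subseteq> A (Suc n) \<union> (circ - F)"
      using \<open>A n \<subseteq> F\<close> unfolding A_Suc unfolding A_def space_M
      by (rule flower_vimage_punctured_arc[OF \<open>flower F\<close> \<sigma>])
    then show ?thesis
      using support space_M by auto
  qed
  have "A 0 \<in> null_sets M"
    using invariant by (intro null_sets_if_vimage_shrinks[OF _ A_sets A_dec A_Inter outside_null shrinks]) auto
  then show ?thesis
    by (simp add: A_def)
qed

lemma path_maximal_initial_segment: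
  fixes \<gamma> :: "real \<Rightarrow> 'a::topological_space"
  assumes "continuous_on {0..1} \<gamma>" and "closed F" and "\<gamma> 0 \<in> F"
  obtains b where "0 \<le> b" "b \<le> 1" "\<gamma> ` {0..b} \<subseteq> F"
    "\<And>t. b < t \<Longrightarrow> t \<le> 1 \<Longrightarrow> \<exists>s. b < s \<and> s < t \<and> \<gamma> s \<notin> F"
proof -
  define K where "K = {0..1} \<inter> \<gamma> -` F"
  define S where "S = {s \<in> {0..1}. {0..s} \<subseteq> K}"
  define b where "b = Sup S"
  have "closed K"
    unfolding K_def using assms(1,2) by (intro continuous_closed_preimage) auto
  have "0 \<in> S" and bdd: "bdd_above S"
    using assms(3) by (auto simp: S_def K_def bdd_above_def)
  then have "0 \<le> b" and "b \<le> 1"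
    unfolding b_def by (auto intro!: cSup_upper cSup_least simp: S_def)
  have "{0..<b} \<subseteq> K"
  proof
    fix r
    assume "r \<in> {0..<b}"
    then obtain s where "s \<in> S" "r < s"
      using less_cSup_iff[OF _ bdd] \<open>0 \<in> S\<close> by (auto simp: b_def)
    with \<open>r \<in> {0..<b}\<close> show "r \<in> K"
      by (auto simp: S_def)
  qed
  have "{0..b} \<subseteq> K"
  proof (cases "b = 0")
    case True
    then show ?thesis
      using \<open>0 \<in> S\<close> by (auto simp: S_def)
  next
    case False
    then have "closure {0..<b} = {0..b}"
      using \<open>0 \<le> b\<close> by simp
    with \<open>{0..<b} \<subseteq> K\<close> \<open>closed K\<close> show ?thesis
      by (metis closure_minimal)
  qed
  moreover have "\<exists>s. b < s \<and> s < t \<and> \<gamma> s \<notin> F" if "b < t" "t \<le> 1" for t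
  proof -
    have "(b + t) / 2 \<notin> S"
      using cSup_upper[OF _ bdd, of "(b + t) / 2"] that by (auto simp: b_def)
    moreover have "(b + t) / 2 \<in> {0..1}"
      using that \<open>0 \<le> b\<close> by auto
    ultimately have "\<not> {0..(b + t) / 2} \<subseteq> K"
      by (simp add: S_def)
    then obtain s where s: "s \<in> {0..(b + t) / 2}" "s \<notin> K"
      by blast
    moreover have "b < s"
      using \<open>{0..b} \<subseteq> K\<close> s by (meson atLeastAtMost_iff not_less subsetD)
    ultimately show ?thesis
      using that by (intro exI[of _ s]) (auto simp: K_def)
  qed
  ultimately show ?thesis
    using that \<open>0 \<le> b\<close> \<open>b \<le> 1\<close> by (auto simp: K_def)
qed

lemma connected_circ_avoids_arc:
  assumes "connected P" and "P \<subseteq> circ" and "1 \<in> P"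
    and "a < 0" and "0 < b" and "b < a + 1" and "cpar a \<notin> P" and "cpar b \<notin> P"
  shows "P \<inter> cpar ` {b..a + 1} = {}"
proof -
  define U where "U = - cpar ` {b..a + 1}"
  define V where "V = - cpar ` {a..b}"
  have "open U" and "open V"
    unfolding U_def V_def
    by (intro open_Compl compact_imp_closed compact_continuous_image continuous_intros compact_Icc)+
  moreover have "U \<inter> V \<inter> P = {}"
  proof -
    have "z \<notin> U \<inter> V" if "z \<in> circ" for z
    proof -
      obtain r where "a \<le> r" "r < a + 1" "z = cpar r"
        using circ_cparE[OF \<open>z \<in> circ\<close>] by blast
      then show ?thesis
        by (cases "r \<le> b") (auto simp: U_def V_def)
    qed
    with \<open>P \<subseteq> circ\<close> show ?thesis
      by blast
  qed
  moreover have "P \<subseteq> U \<union> V"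
  proof
    fix z
    assume "z \<in> P"
    show "z \<in> U \<union> V"
    proof (rule ccontr)
      assume "z \<notin> U \<union> V"
      then obtain r1 r2 where r1: "b \<le> r1" "r1 \<le> a + 1" "z = cpar r1"
        and r2: "a \<le> r2" "r2 \<le> b" "z = cpar r2"
        unfolding U_def V_def by auto
      then obtain k :: int where k: "r1 - r2 = of_int k"
        using cpar_eq_iff[of r1 r2] by (auto elim: Ints_cases)
      moreover have "0 \<le> r1 - r2" "r1 - r2 \<le> 1"
        using r1 r2 by auto
      ultimately have "k = 0 \<or> k = 1"
        by linarith
      then have "r2 = b \<or> r2 = a"
        using k r1 r2 by auto
      then have "z = cpar b \<or> z = cpar a"
        using r2 by auto
      with \<open>z \<in> P\<close> assms(7,8) show False
        by auto
    qed
  qed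
  moreover have "1 \<in> U"
  proof -
    have "cpar r \<noteq> cpar 0" if "b \<le> r" "r \<le> a + 1" for r
      using that assms(4,5) cpar_eqD[of r 0] by auto
    then show ?thesis
      by (auto simp: U_def)
  qed
  ultimately have "V \<inter> P = {}"
    using connectedD[OF \<open>connected P\<close>] \<open>1 \<in> P\<close> by blast
  with \<open>P \<subseteq> U \<union> V\<close> show ?thesis
    by (auto simp: U_def)
qed

lemma connected_circ_within_maximal_arcs:
  assumes "connected P" and "P \<subseteq> F" and "F \<subseteq> circ" and "1 \<in> P" and "0 \<le> b1" and "0 \<le> b2"
    and b1_max: "\<And>t. b1 < t \<Longrightarrow> t \<le> 1 \<Longrightarrow> \<exists>s. b1 < s \<and> s < t \<and> cpar s \<notin> F"
    and b2_max: "\<And>t. b2 < t \<Longrightarrow> t \<le> 1 \<Longrightarrow> \<exists>s. b2 < s \<and> s < t \<and> cpar (- s) \<notin> F"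
  shows "P \<subseteq> cpar ` {- b2..b1}"
proof
  fix y
  assume "y \<in> P"
  then obtain t where t: "- b2 \<le> t" "t < 1 - b2" "y = cpar t"
    using circ_cparE[of y "- b2"] assms(2,3) by auto
  have "t \<le> b1"
  proof (rule ccontr)
    assume "\<not> t \<le> b1"
    then obtain s1 where s1: "b1 < s1" "s1 < t" "cpar s1 \<notin> F"
      using b1_max[of t] t \<open>0 \<le> b2\<close> by auto
    obtain s2 where s2: "b2 < s2" "s2 < 1 - t" "cpar (- s2) \<notin> F"
      using b2_max[of "1 - t"] t \<open>0 \<le> b1\<close> \<open>\<not> t \<le> b1\<close> by auto
    have "P \<inter> cpar ` {s1..- s2 + 1} = {}"
      using assms(1-6) s1 s2 by (intro connected_circ_avoids_arc) auto
    with \<open>y \<in> P\<close> t s1 s2 show False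
      by auto
  qed
  with t show "y \<in> cpar ` {- b2..b1}"
    by (intro image_eqI[of _ _ t]) auto
qed

lemma cpar_interval_subset_punctured_arcs:
  "cpar ` {- b2..b1} \<subseteq> {1} \<union> punctured_arc 1 b1 \<union> punctured_arc (-1) b2"
proof
  fix y
  assume "y \<in> cpar ` {- b2..b1}"
  then obtain t where t: "t \<in> {- b2..b1}" "y = cpar t"
    by blast
  then consider "t = 0" | "t \<in> {0<..b1}" | "- t \<in> {0<..b2}"
    by (cases t "0::real" rule: linorder_cases) auto
  then show "y \<in> {1} \<union> punctured_arc 1 b1 \<union> punctured_arc (-1) b2"
  proof cases
    case 1
    then show ?thesis
      using t by simp
  next
    case 2
    then have "y \<in> punctured_arc 1 b1"
      unfolding punctured_arc_def using t by (intro image_eqI[of _ _ t]) auto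
    then show ?thesis
      by simp
  next
    case 3
    then have "y \<in> punctured_arc (-1) b2"
      unfolding punctured_arc_def using t by (intro image_eqI[of _ _ "- t"]) auto
    then show ?thesis
      by simp
  qed
qed

lemma connected_component_one_in_punctured_arcs:
  assumes "closed F" and "F \<subseteq> circ" and "1 \<in> F"
  obtains b1 b2 where "punctured_arc 1 b1 \<subseteq> F" and "punctured_arc (-1) b2 \<subseteq> F"
    and "connected_component_set F 1 \<subseteq> {1} \<union> punctured_arc 1 b1 \<union> punctured_arc (-1) b2"
proof -
  have "cpar 0 \<in> F" and "cpar (- 0) \<in> F"
    using \<open>1 \<in> F\<close> by simp_all
  obtain b1 where "0 \<le> b1" and "b1 \<le> 1" and b1_arc: "cpar ` {0..b1} \<subseteq> F"
    and b1_max: "\<And>t. b1 < t \<Longrightarrow> t \<le> 1 \<Longrightarrow> \<exists>s. b1 < s \<and> s < t \<and> cpar s \<notin> F"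
    using path_maximal_initial_segment[OF continuous_on_cpar[OF continuous_on_id]
        \<open>closed F\<close> \<open>cpar 0 \<in> F\<close>]
    by blast
  obtain b2 where "0 \<le> b2" and "b2 \<le> 1" and b2_arc: "(\<lambda>r. cpar (- r)) ` {0..b2} \<subseteq> F"
    and b2_max: "\<And>t. b2 < t \<Longrightarrow> t \<le> 1 \<Longrightarrow> \<exists>s. b2 < s \<and> s < t \<and> cpar (- s) \<notin> F"
    using path_maximal_initial_segment[OF continuous_on_cpar[OF continuous_on_minus[OF continuous_on_id]]
        \<open>closed F\<close> \<open>cpar (- 0) \<in> F\<close>]
    by blast
  have "punctured_arc 1 b1 \<subseteq> F" and "punctured_arc (-1) b2 \<subseteq> F"
    using b1_arc b2_arc by (auto simp: punctured_arc_def)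
  moreover have "connected_component_set F 1 \<subseteq> cpar ` {- b2..b1}"
    using connected_circ_within_maximal_arcs[OF connected_connected_component
        connected_component_subset assms(2) _ \<open>0 \<le> b1\<close> \<open>0 \<le> b2\<close> b1_max b2_max] \<open>1 \<in> F\<close>
    by simp
  then have "connected_component_set F 1 \<subseteq> {1} \<union> punctured_arc 1 b1 \<union> punctured_arc (-1) b2"
    using cpar_interval_subset_punctured_arcs by (rule subset_trans)
  ultimately show ?thesis
    by (rule that)
qed

theorem proposition4:
  fixes M :: "complex measure" and F :: "complex set"
  assumes "prob_space M"
    and "sets M = sets (restrict_space borel circ)"
    and "space M = circ"
    and "\<forall>A\<in>sets M. measure M (E2 -` A \<inter> space M) = measure M A"
    and "flower F"
    and "support M \<subseteq> F"
    and "measure M (connected_component_set F 1) > 0"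
  shows "measure M {1} > 0"
proof -
  interpret prob_space M by fact
  let ?P = "connected_component_set F 1"
  have "?P \<in> sets M" and "?P \<noteq> {}"
    using assms(7) measure_notin_sets[of ?P M] by fastforce+
  then have "1 \<in> F"
    using connected_component_eq_empty by blast
  obtain b1 b2 where arcs: "punctured_arc 1 b1 \<subseteq> F" "punctured_arc (-1) b2 \<subseteq> F"
    and P_sub: "?P \<subseteq> {1} \<union> punctured_arc 1 b1 \<union> punctured_arc (-1) b2"
    using connected_component_one_in_punctured_arcs flower_closed flower_subset_circ assms(5) \<open>1 \<in> F\<close> by metis
  have null: "punctured_arc 1 b1 \<union> punctured_arc (-1) b2 \<in> null_sets M"
    using invariant_measure_punctured_arc_null[OF finite_measure assms(2-6)] arcs by auto
  have "{1} \<in> sets M"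
    using assms(2) by (simp add: sets_restrict_space_iff circ_def borel_closed)
  then have "{1} \<union> (punctured_arc 1 b1 \<union> punctured_arc (-1) b2) \<in> sets M"
    using null_setsD2[OF null] by (rule sets.Un)
  with P_sub have "measure M ?P \<le> measure M ({1} \<union> (punctured_arc 1 b1 \<union> punctured_arc (-1) b2))"
    by (intro finite_measure_mono) (auto simp: Un_assoc)
  also have "\<dots> = measure M {1}"
    using \<open>{1} \<in> sets M\<close> null by (rule measure_Un_null_set)
  finally show ?thesis
    using assms(7) by simp
qed

end
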